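(* Let $q$ be a prime power and $L\subset\mathbb{P}^2$ a line defined over $\mathbb{F}_q$. Let $\mathcal{T}_L$ be the set of non-constant homogeneous $f\in\mathbb{F}_q[x,y,z]$ such that the curve $C=\{f=0\}$ is not transverse to $L$. Then $\mu_d(\mathcal{T}_L)=q^{-1}+q^{-2}-q^{-3}$ for all $d\ge 3$. In particular $\mu(\mathcal{T}_L)=q^{-1}+q^{-2}-q^{-3}$.
   Context: Let $R=\mathbb{F}_q[x,y,z]$, $R_d$ the homogeneous polynomials of degree $d$ (including $0$), $\mu_d(\mathcal{A})=\#(\mathcal{A}\cap R_d)/\#R_d$ and $\mu(\mathcal{A})=\lim_{d\to\infty}\mu_d(\mathcal{A})$. For $f\in R_d$, $C=\{f=0\}$ is not transverse to $L$ if the restriction of $f$ to $L$ (a binary form of degree $d$ after choosing coordinates on $L\cong\mathbb{P}^1$) has a repeated root over $\overline{\mathbb{F}}_q$ or is identically zero; equivalently, $L$ does not meet $C$ in $d$ distinct points (it is tangent to $C$, passes through a singular point of $C$, or is contained in $C$). *)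

theory Defs
  imports "HOL-Analysis.Analysis" "HOL-Algebra.Algebraic_Closure_Type"
begin

text \<open>Homogeneous polynomials of degree d in F[x,y,z] are represented by their
  coefficient functions on exponent triples (i,j,k), supported on i+j+k = d.\<close>

definition mono3 :: "nat \<Rightarrow> (nat \<times> nat \<times> nat) set" where
  "mono3 d = {(i,j,k). i + j + k = d}"

definition hom_forms :: "nat \<Rightarrow> ((nat \<times> nat \<times> nat) \<Rightarrow> 'a::field) set" where
  "hom_forms d = {f. \<forall>m. m \<notin> mono3 d \<longrightarrow> f m = 0}"

definition eval3 :: "nat \<Rightarrow> ((nat \<times> nat \<times> nat) \<Rightarrow> 'a::field)
    \<Rightarrow> 'a alg_closure \<times> 'a alg_closure \<times> 'a alg_closure \<Rightarrow> 'a alg_closure" where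
  "eval3 d f p = (case p of (x,y,z) \<Rightarrow>
     (\<Sum>(i,j,k)\<in>mono3 d. to_ac (f (i,j,k)) * x ^ i * y ^ j * z ^ k))"

text \<open>Normalized representatives of points of the projective plane:
  first nonzero coordinate equal to 1.\<close>
definition proj_norm :: "'b::field \<times> 'b \<times> 'b \<Rightarrow> bool" where
  "proj_norm p = (case p of (x,y,z) \<Rightarrow>
     x = 1 \<or> (x = 0 \<and> y = 1) \<or> (x = 0 \<and> y = 0 \<and> z = 1))"

definition line_curve_pts :: "nat \<Rightarrow> 'a::field \<times> 'a \<times> 'a \<Rightarrow> ((nat \<times> nat \<times> nat) \<Rightarrow> 'a)
    \<Rightarrow> ('a alg_closure \<times> 'a alg_closure \<times> 'a alg_closure) set" where
  "line_curve_pts d l f = (case l of (a,b,c) \<Rightarrow>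
     {(x,y,z). proj_norm (x,y,z) \<and> to_ac a * x + to_ac b * y + to_ac c * z = 0
               \<and> eval3 d f (x,y,z) = 0})"

definition transverse :: "nat \<Rightarrow> 'a::field \<times> 'a \<times> 'a \<Rightarrow> ((nat \<times> nat \<times> nat) \<Rightarrow> 'a) \<Rightarrow> bool" where
  "transverse d l f \<longleftrightarrow> finite (line_curve_pts d l f) \<and> card (line_curve_pts d l f) = d"

text \<open>T_L: non-constant homogeneous polynomials (the zero polynomial lies in every R_d)
  whose curve is not transverse to L.\<close>
definition nontransverse_set :: "'a::field \<times> 'a \<times> 'a \<Rightarrow> ((nat \<times> nat \<times> nat) \<Rightarrow> 'a) set" where
  "nontransverse_set l = {f. \<exists>d. d \<ge> 1 \<and> f \<in> hom_forms d \<and> \<not> transverse d l f}"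

definition mu_d :: "nat \<Rightarrow> ((nat \<times> nat \<times> nat) \<Rightarrow> 'a::{finite,field}) set \<Rightarrow> real" where
  "mu_d d A = real (card (A \<inter> hom_forms d)) / real (card (hom_forms d :: ((nat \<times> nat \<times> nat) \<Rightarrow> 'a) set))"

end

(*
  Parametrise L by s u + t w with u, w in F_q^3. Restricting a form f of degree d to L and
  setting s = 1 gives the polynomial h(t) = f(u + t w) of degree at most d, and f |-> h is an
  F_q-linear surjection onto the polynomials of degree at most d, so all its fibres have the same
  size and mu_d is the proportion of non-transverse h among these q^(d+1) polynomials. L meets C
  in the roots of h, plus the point at infinity w when deg h < d; over the perfect field F_q, h has
  deg h distinct roots in the algebraic closure exactly when it is squarefree. So C is transverse
  to L iff h is squarefree of degree d or d - 1. Writing every nonzero polynomial uniquely as b a^2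
  with a monic and b squarefree shows that there are (q - 1)(q^n - q^(n-1)) squarefree
  polynomials of degree n >= 2, whence for d >= 3
    mu_d = 1 - (q - 1)(q^d - q^(d-2)) / q^(d+1) = 1/q + 1/q^2 - 1/q^3.
*)

theory Submission
  imports Defs "HOL-Library.Function_Algebras"
begin

text \<open>HOL-Algebra, imported by \<open>Defs\<close>, shadows these names of the polynomial library.\<close>

hide_const (open) UnivPoly.coeff UnivPoly.monom Polynomials.degree Polynomials.lead_coeff
  module.smult Divisibility.prime Divisibility.irreducible Coset.order

section \<open>Field homomorphisms and polynomials\<close>

locale field_hom =
  fixes \<phi> :: "'a::field \<Rightarrow> 'b::field"
  assumes hom_add [simp]: "\<phi> (x + y) = \<phi> x + \<phi> y"
    and hom_mult [simp]: "\<phi> (x * y) = \<phi> x * \<phi> y"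
    and hom_one [simp]: "\<phi> 1 = 1"
begin

lemma hom_zero [simp]: "\<phi> 0 = 0"
  using hom_add[of 0 0] by (metis add.right_neutral add_left_cancel)

lemma hom_eq_0_iff [simp]: "\<phi> x = 0 \<longleftrightarrow> x = 0"
proof
  assume "\<phi> x = 0"
  hence "\<phi> (x * inverse x) = 0" by simp
  thus "x = 0" by (cases "x = 0") simp_all
qed simp

lemma hom_sum: "\<phi> (sum g A) = (\<Sum>x\<in>A. \<phi> (g x))"
  by (induction A rule: infinite_finite_induct) simp_all

lemma hom_of_nat [simp]: "\<phi> (of_nat n) = of_nat n"
  by (induction n) simp_all

lemma coeff_map_poly_hom [simp]: "coeff (map_poly \<phi> p) n = \<phi> (coeff p n)"
  by (simp add: coeff_map_poly)

lemma degree_map_poly_hom [simp]: "degree (map_poly \<phi> p) = degree p"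
  by (simp add: degree_map_poly)

lemma map_poly_hom_eq_0_iff [simp]: "map_poly \<phi> p = 0 \<longleftrightarrow> p = 0"
  by (simp add: map_poly_eq_0_iff)

lemma map_poly_hom_add [simp]: "map_poly \<phi> (p + q) = map_poly \<phi> p + map_poly \<phi> q"
  by (rule poly_eqI) simp

lemma map_poly_hom_sum: "map_poly \<phi> (sum g A) = (\<Sum>x\<in>A. map_poly \<phi> (g x))"
  by (induction A rule: infinite_finite_induct) simp_all

lemma map_poly_hom_mult [simp]: "map_poly \<phi> (p * q) = map_poly \<phi> p * map_poly \<phi> q"
  by (rule poly_eqI) (simp add: coeff_mult hom_sum)

lemma map_poly_hom_smult [simp]: "map_poly \<phi> (smult c p) = smult (\<phi> c) (map_poly \<phi> p)"
  by (rule poly_eqI) simp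

lemma map_poly_hom_pCons [simp]: "map_poly \<phi> (pCons c p) = pCons (\<phi> c) (map_poly \<phi> p)"
  by (rule poly_eqI) (simp add: coeff_pCons split: nat.split)

lemma map_poly_hom_power [simp]: "map_poly \<phi> (p ^ n) = map_poly \<phi> p ^ n"
  by (induction n) simp_all

lemma map_poly_hom_pderiv [simp]: "map_poly \<phi> (pderiv p) = pderiv (map_poly \<phi> p)"
  by (rule poly_eqI) (simp add: coeff_pderiv)

lemma squarefree_map_poly_homD: "squarefree (map_poly \<phi> p) \<Longrightarrow> squarefree p"
proof (rule squarefreeI)
  fix x assume sf: "squarefree (map_poly \<phi> p)" and "x ^ 2 dvd p"
  hence "map_poly \<phi> x ^ 2 dvd map_poly \<phi> p"
    by (metis dvd_def map_poly_hom_mult map_poly_hom_power)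
  hence "is_unit (map_poly \<phi> x)" using sf squarefreeD by blast
  thus "is_unit x"
    by (metis degree_map_poly_hom is_unit_iff_degree map_poly_hom_eq_0_iff not_is_unit_0)
qed

end

interpretation to_ac: field_hom to_ac
  by standard simp_all

section \<open>Squarefree polynomials over a finite field\<close>

lemma prime_CHAR_finite_field: "prime CHAR('a::{finite,field})"
  using prime_CHAR_semidom[where 'a = 'a] finite_imp_CHAR_pos[where 'a = 'a] by simp

lemma surj_power_CHAR: "surj (\<lambda>x::'a::{finite,field}. x ^ CHAR('a))"
proof -
  have "inj (\<lambda>x::'a. x ^ CHAR('a))"
  proof (rule injI)
    fix x y :: 'a assume "x ^ CHAR('a) = y ^ CHAR('a)"
    moreover have "(x + (- y)) ^ CHAR('a) = x ^ CHAR('a) + (- y) ^ CHAR('a)"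
      by (rule freshmans_dream[OF prime_CHAR_finite_field refl])
    moreover have "(- y) ^ CHAR('a) = - (y ^ CHAR('a))"
      by (rule minus_power_prime_CHAR[OF refl prime_CHAR_finite_field])
    ultimately have "(x - y) ^ CHAR('a) = 0" by simp
    thus "x = y" by simp
  qed
  thus ?thesis by (simp add: finite_UNIV_inj_surj)
qed

lemma pderiv_eq_0_imp_CHAR_power:
  fixes p :: "'a::{finite,field} poly"
  assumes "pderiv p = 0"
  obtains g where "p = g ^ CHAR('a)"
proof -
  let ?P = "CHAR('a)"
  have P1: "?P > 1" using prime_CHAR_finite_field prime_gt_1_nat by blast
  have CHAR_dvd: "?P dvd k" if "coeff p k \<noteq> 0" for k
  proof (cases k)
    case (Suc n)
    have "of_nat k * coeff p k = 0"
      using arg_cong[OF assms, of "\<lambda>q. coeff q n"] Suc by (simp add: coeff_pderiv)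
    thus ?thesis using that of_nat_eq_0_iff_char_dvd by auto
  qed simp
  obtain r :: "'a \<Rightarrow> 'a" where r: "\<And>c. r c ^ ?P = c"
    using surj_power_CHAR by (metis surj_f_inv_f)
  define g where "g = (\<Sum>j\<le>degree p. monom (r (coeff p (j * ?P))) j)"
  have "g ^ ?P = (\<Sum>j\<le>degree p. monom (coeff p (j * ?P)) (j * ?P))"
    unfolding g_def
    by (subst freshmans_dream_sum) (simp_all add: prime_CHAR_finite_field monom_power r)
  also have "\<dots> = p"
  proof (rule poly_eqI)
    fix n
    have inj: "j * ?P = n \<longleftrightarrow> j = n div ?P" if "?P dvd n" for j
      using that P1 by auto
    show "coeff (\<Sum>j\<le>degree p. monom (coeff p (j * ?P)) (j * ?P)) n = coeff p n"
    proof (cases "?P dvd n")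
      case True
      have "n div ?P \<le> degree p \<or> coeff p n = 0"
        using True P1 by (metis coeff_eq_0 div_le_dividend le_less_trans not_le)
      thus ?thesis using True by (auto simp: coeff_sum inj)
    next
      case False
      hence "coeff p n = 0" "\<And>j. j * ?P \<noteq> n" using CHAR_dvd by auto
      thus ?thesis by (simp add: coeff_sum)
    qed
  qed
  finally show ?thesis using that by metis
qed

lemma irreducible_imp_pderiv_nonzero:
  fixes p :: "'a::{finite,field} poly"
  assumes "irreducible p"
  shows "pderiv p \<noteq> 0"
proof
  assume "pderiv p = 0"
  then obtain g where "p = g ^ CHAR('a)" by (rule pderiv_eq_0_imp_CHAR_power)
  moreover have "CHAR('a) \<noteq> 1" using prime_CHAR_finite_field[where 'a = 'a] by auto
  ultimately show False using assms by simp
qed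

lemma degree_pderiv_less:
  fixes p :: "'a::field poly"
  assumes "pderiv p \<noteq> 0"
  shows "degree (pderiv p) < degree p"
proof -
  have "degree p \<noteq> 0" using assms by (metis degree_eq_zeroE pderiv_singleton)
  moreover have "degree (pderiv p) \<le> degree p - 1"
    by (rule degree_le) (auto simp: coeff_pderiv coeff_eq_0)
  ultimately show ?thesis by linarith
qed

lemma squarefree_imp_coprime_pderiv:
  fixes p :: "'a::{finite,field_gcd} poly"
  assumes sf: "squarefree p"
  shows "coprime p (pderiv p)"
proof (rule ccontr)
  assume "\<not> coprime p (pderiv p)"
  then obtain c where c: "c dvd p" "c dvd pderiv p" "\<not> is_unit c" by (rule not_coprimeE) blast
  have "c \<noteq> 0" using c sf by auto
  then obtain \<pi> where \<pi>: "\<pi> dvd c" "prime \<pi>" using prime_divisor_exists c(3) by blast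
  obtain g where g: "p = \<pi> * g" using \<pi> c dvd_trans by (metis dvdE)
  have "\<pi> dvd pderiv p" using \<pi> c dvd_trans by blast
  moreover have "pderiv p = \<pi> * pderiv g + g * pderiv \<pi>" using g by (simp add: pderiv_mult)
  ultimately have "\<pi> dvd g * pderiv \<pi>" by (metis dvd_add_right_iff dvd_triv_left)
  hence "\<pi> dvd g \<or> \<pi> dvd pderiv \<pi>" using \<pi>(2) by (simp add: prime_dvd_mult_iff)
  thus False
  proof
    assume "\<pi> dvd g"
    hence "\<pi> ^ 2 dvd p" using g by (simp add: power2_eq_square)
    thus False using sf squarefreeD \<pi>(2) by (metis not_prime_unit)
  next
    assume dvd: "\<pi> dvd pderiv \<pi>"
    have nz: "pderiv \<pi> \<noteq> 0"
      using \<pi>(2) by (intro irreducible_imp_pderiv_nonzero prime_elem_imp_irreducible) simp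
    thus False using dvd_imp_degree_le[OF dvd nz] degree_pderiv_less[OF nz] by simp
  qed
qed

text \<open>An arbitrary field type carries no gcd structure, so \<open>'a poly\<close> is not known to be
  factorial. Its copy \<open>'a fcopy\<close> is made a \<open>field_gcd\<close> below; this provides squarefree parts,
  prime factors and Bezout identities for \<open>'a fcopy poly\<close>, and results are transported back
  along the isomorphism \<open>to_fcopy\<close>.\<close>

typedef (overloaded) 'a fcopy = "UNIV :: 'a::field set"
  morphisms of_fcopy to_fcopy by simp

instantiation fcopy :: (field) field
begin
definition "0 = to_fcopy 0"
definition "1 = to_fcopy 1"
definition "x + y = to_fcopy (of_fcopy x + of_fcopy y)"
definition "x - y = to_fcopy (of_fcopy x - of_fcopy y)"
definition "x * y = to_fcopy (of_fcopy x * of_fcopy y)"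
definition "- x = to_fcopy (- of_fcopy x)"
definition "inverse x = to_fcopy (inverse (of_fcopy x))"
definition "x div y = to_fcopy (of_fcopy x / of_fcopy y)"
instance
  by standard (simp_all add: zero_fcopy_def one_fcopy_def plus_fcopy_def minus_fcopy_def
      times_fcopy_def uminus_fcopy_def inverse_fcopy_def divide_fcopy_def to_fcopy_inverse
      of_fcopy_inverse of_fcopy_inject algebra_simps divide_inverse flip: of_fcopy_inject)
end

instance fcopy :: ("{finite,field}") finite
proof
  have "(UNIV :: 'a fcopy set) = to_fcopy ` UNIV" by (metis of_fcopy_inverse surj_def)
  moreover have "finite (to_fcopy ` (UNIV :: 'a set))" by simp
  ultimately show "finite (UNIV :: 'a fcopy set)" by simp
qed

instantiation fcopy :: (field)
  "{unique_euclidean_ring, normalization_euclidean_semiring, normalization_semidom_multiplicative}"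
begin
definition [simp]: "normalize_fcopy = (normalize_field :: 'a fcopy \<Rightarrow> _)"
definition [simp]: "unit_factor_fcopy = (unit_factor_field :: 'a fcopy \<Rightarrow> _)"
definition [simp]: "modulo_fcopy = (mod_field :: 'a fcopy \<Rightarrow> _)"
definition [simp]: "euclidean_size_fcopy = (euclidean_size_field :: 'a fcopy \<Rightarrow> _)"
definition [simp]: "division_segment (x :: 'a fcopy) = 1"
instance
  by standard (simp_all add: dvd_field_iff field_split_simps split: if_splits)
end

instantiation fcopy :: (field) euclidean_ring_gcd
begin
definition gcd_fcopy :: "'a fcopy \<Rightarrow> 'a fcopy \<Rightarrow> 'a fcopy" where
  "gcd_fcopy = Euclidean_Algorithm.gcd"
definition lcm_fcopy :: "'a fcopy \<Rightarrow> 'a fcopy \<Rightarrow> 'a fcopy" where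
  "lcm_fcopy = Euclidean_Algorithm.lcm"
definition Gcd_fcopy :: "'a fcopy set \<Rightarrow> 'a fcopy" where
  "Gcd_fcopy = Euclidean_Algorithm.Gcd"
definition Lcm_fcopy :: "'a fcopy set \<Rightarrow> 'a fcopy" where
  "Lcm_fcopy = Euclidean_Algorithm.Lcm"
instance by standard (simp_all add: gcd_fcopy_def lcm_fcopy_def Gcd_fcopy_def Lcm_fcopy_def)
end

instance fcopy :: (field) semiring_gcd_mult_normalize ..
instance fcopy :: (field) field_gcd ..

interpretation of_fcopy: field_hom of_fcopy
  by (simp add: field_hom_def plus_fcopy_def times_fcopy_def one_fcopy_def to_fcopy_inverse)

interpretation to_fcopy: field_hom to_fcopy
  by (simp add: field_hom_def plus_fcopy_def times_fcopy_def one_fcopy_def to_fcopy_inverse)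

lemma CARD_fcopy: "CARD('a::{finite,field} fcopy) = CARD('a)"
proof -
  have "inj (of_fcopy :: 'a fcopy \<Rightarrow> 'a)" by (rule injI) (simp add: of_fcopy_inject)
  moreover have "range (of_fcopy :: 'a fcopy \<Rightarrow> 'a) = UNIV"
    by (rule type_definition.Rep_range[OF type_definition_fcopy])
  ultimately show ?thesis by (metis card_image)
qed

lemma map_poly_of_fcopy_to_fcopy [simp]: "map_poly of_fcopy (map_poly to_fcopy p) = p"
  by (rule poly_eqI) (simp add: to_fcopy_inverse)

lemma map_poly_to_fcopy_of_fcopy [simp]: "map_poly to_fcopy (map_poly of_fcopy p) = p"
  by (rule poly_eqI) (simp add: of_fcopy_inverse)

lemma squarefree_map_poly_to_fcopy_iff [simp]:
  "squarefree (map_poly to_fcopy p) \<longleftrightarrow> squarefree p"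
proof
  assume "squarefree p"
  hence "squarefree (map_poly of_fcopy (map_poly to_fcopy p))" by simp
  thus "squarefree (map_poly to_fcopy p)" by (rule of_fcopy.squarefree_map_poly_homD)
qed (rule to_fcopy.squarefree_map_poly_homD)

lemma squarefree_imp_bezout_pderiv:
  fixes p :: "'a::{finite,field} poly"
  assumes "squarefree p"
  obtains u v where "u * p + v * pderiv p = 1"
proof -
  let ?P = "map_poly to_fcopy p"
  have "coprime ?P (pderiv ?P)" using assms by (simp add: squarefree_imp_coprime_pderiv)
  then obtain u v where "u * ?P + v * pderiv ?P = 1"
    using bezout_coefficients_fst_snd[of ?P "pderiv ?P"] by (metis coprime_imp_gcd_eq_1)
  hence "map_poly of_fcopy u * p + map_poly of_fcopy v * pderiv p = 1"
    by (metis of_fcopy.map_poly_hom_add of_fcopy.map_poly_hom_mult of_fcopy.map_poly_hom_pderiv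
        map_poly_of_fcopy_to_fcopy map_poly_1' of_fcopy.hom_one)
  thus ?thesis using that by blast
qed

lemma rsquarefreeI_pderiv:
  fixes p :: "'a::idom poly"
  assumes "p \<noteq> 0" and no_common_root: "\<And>x. poly p x = 0 \<Longrightarrow> poly (pderiv p) x \<noteq> 0"
  shows "rsquarefree p"
  unfolding rsquarefree_def
proof (intro conjI allI)
  fix a
  show "order a p = 0 \<or> order a p = 1"
  proof (rule ccontr)
    assume "\<not> (order a p = 0 \<or> order a p = 1)"
    hence "[:-a, 1:] ^ 2 dvd p" using order_divides by force
    then obtain k where "p = [:-a, 1:] ^ 2 * k" by (elim dvdE)
    hence p: "p = [:-a, 1:] * ([:-a, 1:] * k)" by (simp only: power2_eq_square mult.assoc)
    have root: "poly [:-a, 1:] a = 0" by simp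
    have "poly p a = 0" "poly (pderiv p) a = 0"
      unfolding p by (simp_all only: pderiv_mult poly_add poly_mult root mult_zero_left add_0)
    thus False using no_common_root by blast
  qed
qed (rule assms(1))

lemma squarefree_imp_rsquarefree_map_poly:
  fixes p :: "'a::{finite,field} poly"
  assumes "field_hom \<phi>" and "squarefree p"
  shows "rsquarefree (map_poly \<phi> p)"
proof -
  interpret field_hom \<phi> by fact
  obtain u v where "u * p + v * pderiv p = 1"
    using assms(2) by (rule squarefree_imp_bezout_pderiv)
  hence bezout: "map_poly \<phi> u * map_poly \<phi> p + map_poly \<phi> v * pderiv (map_poly \<phi> p) = 1"
    by (metis map_poly_hom_add map_poly_hom_mult map_poly_hom_pderiv map_poly_1' hom_one)
  show ?thesis
  proof (rule rsquarefreeI_pderiv)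
    show "map_poly \<phi> p \<noteq> 0" using assms(2) by auto
    fix x assume "poly (map_poly \<phi> p) x = 0"
    thus "poly (pderiv (map_poly \<phi> p)) x \<noteq> 0"
      using arg_cong[OF bezout, of "\<lambda>q. poly q x"] by auto
  qed
qed

lemma rsquarefree_map_poly_imp_squarefree:
  fixes \<phi> :: "'a::field \<Rightarrow> 'b::alg_closed_field"
  assumes "field_hom \<phi>" and rsf: "rsquarefree (map_poly \<phi> p)"
  shows "squarefree p"
proof (rule squarefreeI)
  interpret field_hom \<phi> by fact
  fix x assume x: "x ^ 2 dvd p"
  show "is_unit x"
  proof (rule ccontr)
    assume "\<not> is_unit x"
    moreover have "x \<noteq> 0" using x rsf by (auto simp: rsquarefree_def)
    ultimately have "degree (map_poly \<phi> x) > 0" by (simp add: is_unit_iff_degree)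
    then obtain r where "poly (map_poly \<phi> x) r = 0" using alg_closed_imp_poly_has_root by blast
    hence "[:-r, 1:] ^ 2 dvd map_poly \<phi> x ^ 2" by (simp add: poly_eq_0_iff_dvd dvd_power_same)
    also have "map_poly \<phi> x ^ 2 dvd map_poly \<phi> p"
      using x by (metis dvd_def map_poly_hom_mult map_poly_hom_power)
    finally have "2 \<le> order r (map_poly \<phi> p)"
      using rsf by (simp add: order_divides rsquarefree_def)
    thus False using rsf unfolding rsquarefree_def by (auto dest!: spec[of _ r])
  qed
qed

lemma size_proots_alg_closed: "size (proots p) = degree (p :: 'a::alg_closed_field poly)"
proof (cases "p = 0")
  case False
  then obtain A where A: "size A = degree p" "p = smult (lead_coeff p) (\<Prod>x\<in>#A. [:-x, 1:])"
    using alg_closed_imp_factorization by blast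
  have "proots p = proots (\<Prod>x\<in>#A. [:-x, 1:])"
    using False by (subst A(2)) simp
  also have "\<dots> = A"
  proof (induction A)
    case (add x A)
    have "proots (\<Prod>y\<in>#add_mset x A. [:-y, 1:]) = proots ([:-x, 1:] * (\<Prod>y\<in>#A. [:-y, 1:]))"
      by simp
    also have "\<dots> = proots [:-x, 1:] + proots (\<Prod>y\<in>#A. [:-y, 1:])"
      by (rule proots_mult) auto
    finally show ?case using add.IH by simp
  qed simp
  finally show ?thesis using A(1) by simp
qed simp

lemma card_roots_eq_degree_iff_rsquarefree:
  fixes p :: "'a::alg_closed_field poly"
  assumes "p \<noteq> 0"
  shows "card {x. poly p x = 0} = degree p \<longleftrightarrow> rsquarefree p"
proof -
  let ?R = "{x. poly p x = 0}"
  have fin: "finite ?R" using assms by (rule poly_roots_finite)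
  have degree_eq: "degree p = (\<Sum>x\<in>?R. order x p)"
    using size_proots_alg_closed[of p] assms by (simp add: size_multiset_overloaded_eq)
  have order_pos: "1 \<le> order x p" if "x \<in> ?R" for x
    using that assms by (simp add: Suc_le_eq order_gt_0_iff)
  show ?thesis
  proof
    assume card: "card ?R = degree p"
    have "order x p \<le> 1" if "x \<in> ?R" for x
    proof (rule ccontr)
      assume "\<not> order x p \<le> 1"
      hence "(\<Sum>x\<in>?R. 1) < (\<Sum>x\<in>?R. order x p)"
        using that order_pos fin by (intro sum_strict_mono_ex1) auto
      thus False using card degree_eq by simp
    qed
    thus "rsquarefree p"
      using assms order_pos
      by (metis (mono_tags) le_antisym mem_Collect_eq order_0I rsquarefree_def)
  next
    assume "rsquarefree p"
    hence "order x p = 1" if "x \<in> ?R" for x using that assms by (simp add: rsquarefree_root_order)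
    thus "card ?R = degree p" using degree_eq by simp
  qed
qed

lemma card_roots_map_poly_eq_degree_iff_squarefree:
  fixes p :: "'a::{finite,field} poly" and \<phi> :: "'a \<Rightarrow> 'b::alg_closed_field"
  assumes "field_hom \<phi>" and "p \<noteq> 0"
  shows "card {x. poly (map_poly \<phi> p) x = 0} = degree p \<longleftrightarrow> squarefree p"
proof -
  interpret field_hom \<phi> by fact
  show ?thesis
    using card_roots_eq_degree_iff_rsquarefree[of "map_poly \<phi> p"] assms
      squarefree_imp_rsquarefree_map_poly rsquarefree_map_poly_imp_squarefree
    by auto
qed

section \<open>Counting squarefree polynomials\<close>

definition polys_below :: "nat \<Rightarrow> 'a::zero poly set" where
  "polys_below n = {p. \<forall>i\<ge>n. coeff p i = 0}"

lemma polys_below_Suc_iff: "p \<in> polys_below (Suc d) \<longleftrightarrow> degree p \<le> d"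
  by (auto simp: polys_below_def coeff_eq_0 intro: degree_le)

lemma polys_below_eq_Poly_image: "polys_below n = Poly ` {xs. length xs = n}"
proof (intro equalityI subsetI)
  fix p :: "'a poly" assume p: "p \<in> polys_below n"
  have "p = Poly (map (coeff p) [0..<n])"
    by (rule poly_eqI) (use p in \<open>auto simp: polys_below_def nth_default_def\<close>)
  thus "p \<in> Poly ` {xs. length xs = n}" by auto
qed (auto simp: polys_below_def nth_default_def)

lemma inj_on_Poly_length: "inj_on Poly {xs :: 'a::zero list. length xs = n}"
proof (rule inj_onI)
  fix xs ys :: "'a list"
  assume xs: "xs \<in> {xs. length xs = n}" and ys: "ys \<in> {xs. length xs = n}"
    and eq: "Poly xs = Poly ys"
  have "xs ! i = ys ! i" if "i < n" for i
    using arg_cong[OF eq, of "\<lambda>p. coeff p i"] xs ys that by (simp add: nth_default_def)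
  thus "xs = ys" using xs ys by (simp add: list_eq_iff_nth_eq)
qed

lemma card_polys_below: "card (polys_below n :: 'a::{zero,finite} poly set) = CARD('a) ^ n"
  unfolding polys_below_eq_Poly_image
  using card_lists_length_eq[of "UNIV :: 'a set" n]
  by (simp add: card_image[OF inj_on_Poly_length])

lemma finite_polys_below [simp]: "finite (polys_below n :: 'a::{zero,finite} poly set)"
  unfolding polys_below_eq_Poly_image
  using finite_lists_length_eq[of "UNIV :: 'a set" n] by simp

lemma card_polys_of_degree:
  "card {p :: 'a::{zero,finite} poly. p \<noteq> 0 \<and> degree p = n} = (CARD('a) - 1) * CARD('a) ^ n"
proof -
  have "{p :: 'a poly. p \<noteq> 0 \<and> degree p = n} = polys_below (Suc n) - polys_below n"
  proof (intro equalityI subsetI)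
    fix p :: "'a poly" assume "p \<in> {p. p \<noteq> 0 \<and> degree p = n}"
    hence "degree p \<le> n" "coeff p n \<noteq> 0" by auto
    thus "p \<in> polys_below (Suc n) - polys_below n"
      using polys_below_Suc_iff[of p n] by (auto simp: polys_below_def)
  next
    fix p :: "'a poly" assume p: "p \<in> polys_below (Suc n) - polys_below n"
    then obtain i where "n \<le> i" "coeff p i \<noteq> 0" by (auto simp: polys_below_def)
    moreover have "degree p \<le> n" using p polys_below_Suc_iff by blast
    ultimately show "p \<in> {p. p \<noteq> 0 \<and> degree p = n}" using le_degree by fastforce
  qed
  moreover have "polys_below n \<subseteq> (polys_below (Suc n) :: 'a poly set)"
    by (auto simp: polys_below_def)
  ultimately show ?thesis
    by (simp add: card_Diff_subset card_polys_below diff_mult_distrib)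
qed

definition monic_polys :: "nat \<Rightarrow> 'a::comm_ring_1 poly set" where
  "monic_polys n = {p. lead_coeff p = 1 \<and> degree p = n}"

lemma monic_polys_eq_image: "monic_polys n = (\<lambda>r. monom 1 n + r) ` polys_below n"
proof (intro equalityI subsetI)
  fix p :: "'a poly" assume p: "p \<in> monic_polys n"
  have "p - monom 1 n \<in> polys_below n"
    using p by (auto simp: monic_polys_def polys_below_def coeff_eq_0 coeff_monom)
  thus "p \<in> (\<lambda>r. monom 1 n + r) ` polys_below n" by force
next
  fix p :: "'a poly" assume "p \<in> (\<lambda>r. monom 1 n + r) ` polys_below n"
  then obtain r where r: "r \<in> polys_below n" "p = monom 1 n + r" by auto
  have "coeff p n = 1" and "\<forall>i>n. coeff p i = 0" using r by (auto simp: polys_below_def)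
  moreover from this have "degree p = n" by (intro le_antisym degree_le le_degree) simp_all
  ultimately show "p \<in> monic_polys n" by (simp add: monic_polys_def)
qed

lemma card_monic_polys: "card (monic_polys n :: 'a::{comm_ring_1,finite} poly set) = CARD('a) ^ n"
  unfolding monic_polys_eq_image by (subst card_image) (auto simp: inj_on_def card_polys_below)

lemma finite_monic_polys [simp]: "finite (monic_polys n :: 'a::{comm_ring_1,finite} poly set)"
  unfolding monic_polys_eq_image by simp

lemma square_part_squarefree_mult_square:
  fixes a b :: "'a::{factorial_semiring_multiplicative}"
  assumes "squarefree b"
  shows "square_part (b * a ^ 2) = normalize a"
proof (cases "a = 0")
  case False
  have b0: "b \<noteq> 0" using assms by auto
  have "normalize (square_part (b * a ^ 2)) = normalize a"
  proof (rule multiplicity_eq_imp_eq)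
    fix p :: 'a assume p: "prime p"
    have "multiplicity p (b * a ^ 2) = multiplicity p b + 2 * multiplicity p a"
      using p b0 False
      by (simp add: prime_elem_multiplicity_mult_distrib prime_elem_multiplicity_power_distrib)
    moreover have "multiplicity p b \<le> 1" using assms b0 p squarefree_factorial_semiring'' by auto
    ultimately show "multiplicity p (square_part (b * a ^ 2)) = multiplicity p a"
      using p by (simp add: prime_multiplicity_square_part)
  qed (use False b0 in simp_all)
  thus ?thesis by simp
qed simp

lemma monic_iff_normalize_eq:
  fixes p :: "'a::field_gcd poly"
  assumes "p \<noteq> 0"
  shows "lead_coeff p = 1 \<longleftrightarrow> normalize p = p"
proof
  assume "lead_coeff p = 1"
  thus "normalize p = p" by (simp add: normalize_poly_eq_map_poly)
next
  assume "normalize p = p"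
  hence "lead_coeff p = normalize (lead_coeff p)"
    using coeff_normalize[of p "degree p"] by simp
  also have "\<dots> = 1" using assms by (simp add: normalize_1_iff dvd_field_iff)
  finally show "lead_coeff p = 1" .
qed

lemma square_decomposition_unique:
  fixes a b a' b' :: "'a::field_gcd poly"
  assumes "squarefree b" "squarefree b'" "lead_coeff a = 1" "lead_coeff a' = 1"
    and "b * a ^ 2 = b' * a' ^ 2"
  shows "a = a'" and "b = b'"
proof -
  have "normalize a = a" "normalize a' = a'"
    using assms(3,4) by (simp_all add: normalize_poly_eq_map_poly)
  thus "a = a'"
    using assms(5) square_part_squarefree_mult_square[OF assms(1), of a]
      square_part_squarefree_mult_square[OF assms(2), of a'] by simp
  moreover have "a \<noteq> 0" using assms(3) by auto
  ultimately show "b = b'" using assms(5) by simp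
qed

definition square_decompositions :: "nat \<Rightarrow> ('a::field_gcd poly \<times> 'a poly) set" where
  "square_decompositions n =
     (\<Union>k\<le>n div 2. monic_polys k \<times> {b. squarefree b \<and> degree b = n - 2 * k})"

lemma bij_betw_square_decompositions:
  "bij_betw (\<lambda>(a, b). b * a ^ 2) (square_decompositions n)
     {p :: 'a::field_gcd poly. p \<noteq> 0 \<and> degree p = n}"
proof (rule bij_betw_imageI)
  show "inj_on (\<lambda>(a, b). b * a ^ 2) (square_decompositions n :: ('a poly \<times> 'a poly) set)"
  proof (rule inj_onI)
    fix x y :: "'a poly \<times> 'a poly"
    assume "x \<in> square_decompositions n" "y \<in> square_decompositions n"
      and eq: "(\<lambda>(a, b). b * a ^ 2) x = (\<lambda>(a, b). b * a ^ 2) y"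
    then obtain a b a' b' :: "'a poly" where "x = (a, b)" "y = (a', b')"
      "lead_coeff a = 1" "lead_coeff a' = 1" "squarefree b" "squarefree b'"
      by (force simp: square_decompositions_def monic_polys_def)
    thus "x = y" using eq square_decomposition_unique[of b b' a a'] by simp
  qed
next
  show "(\<lambda>(a, b). b * a ^ 2) ` square_decompositions n = {p :: 'a poly. p \<noteq> 0 \<and> degree p = n}"
  proof (intro equalityI subsetI)
    fix p :: "'a poly" assume "p \<in> (\<lambda>(a, b). b * a ^ 2) ` square_decompositions n"
    then obtain k a b where k: "k \<le> n div 2" and a: "lead_coeff a = 1" "degree a = k"
      and b: "squarefree b" "degree b = n - 2 * k" and p: "p = b * a ^ 2"
      by (auto simp: square_decompositions_def monic_polys_def)
    have "a \<noteq> 0" "b \<noteq> 0" using a b by auto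
    hence "p \<noteq> 0" "degree p = degree b + 2 * degree a"
      by (simp_all add: p degree_mult_eq degree_power_eq)
    moreover have "2 * k \<le> n" using k by linarith
    ultimately show "p \<in> {p. p \<noteq> 0 \<and> degree p = n}" using a b by simp
  next
    fix p :: "'a poly" assume p: "p \<in> {p. p \<noteq> 0 \<and> degree p = n}"
    define a b where "a = square_part p" and "b = squarefree_part p"
    have "p = b * a ^ 2" unfolding a_def b_def by (rule squarefree_decompose)
    moreover have "a \<noteq> 0" "b \<noteq> 0" using p by (simp_all add: a_def b_def)
    moreover from this have "lead_coeff a = 1" by (simp add: a_def monic_iff_normalize_eq)
    moreover have "degree p = degree b + 2 * degree a"
      using calculation by (simp add: degree_mult_eq degree_power_eq)
    ultimately have "(a, b) \<in> square_decompositions n"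
      using p by (auto simp: square_decompositions_def monic_polys_def b_def
          intro!: bexI[of _ "degree a"])
    thus "p \<in> (\<lambda>(a, b). b * a ^ 2) ` square_decompositions n"
      by (rule image_eqI[rotated]) (simp add: \<open>p = b * a ^ 2\<close>)
  qed
qed

lemma card_polys_of_degree_by_square_part:
  "card {p :: 'a::{finite,field_gcd} poly. p \<noteq> 0 \<and> degree p = n} =
     (\<Sum>k\<le>n div 2. card (monic_polys k :: 'a poly set) *
        card {p :: 'a poly. squarefree p \<and> degree p = n - 2 * k})"
proof -
  have finite_squarefree: "finite {p :: 'a poly. squarefree p \<and> degree p = m}" for m
    by (rule finite_subset[of _ "polys_below (Suc m)"]) (auto simp: polys_below_Suc_iff)
  have "card {p :: 'a poly. p \<noteq> 0 \<and> degree p = n} =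
      card (square_decompositions n :: ('a poly \<times> _) set)"
    by (rule bij_betw_same_card[OF bij_betw_square_decompositions, symmetric])
  also have "\<dots> = (\<Sum>k\<le>n div 2.
      card ((monic_polys k :: 'a poly set) \<times> {b :: 'a poly. squarefree b \<and> degree b = n - 2 * k}))"
    unfolding square_decompositions_def
    by (rule card_UN_disjoint) (simp_all add: finite_squarefree, auto simp: monic_polys_def)
  finally show ?thesis by (simp add: card_cartesian_product)
qed

lemma card_squarefree_polys_of_degree:
  fixes n :: nat
  defines "q \<equiv> real CARD('a::{finite,field_gcd})"
  assumes "n \<ge> 2"
  shows "real (card {p :: 'a poly. squarefree p \<and> degree p = n}) = (q - 1) * (q ^ n - q ^ (n - 1))"
proof -
  let ?q = "CARD('a)"
  let ?S = "\<lambda>m. card {p :: 'a poly. squarefree p \<and> degree p = m}"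
  \<comment> \<open>comparing the decompositions in degrees \<open>n\<close> and \<open>n - 2\<close> isolates \<open>?S n\<close>\<close>
  have decomp: "(?q - 1) * ?q ^ m = (\<Sum>k\<le>m div 2. ?q ^ k * ?S (m - 2 * k))" for m
    using card_polys_of_degree_by_square_part[of m, where 'a = 'a]
    by (simp add: card_polys_of_degree card_monic_polys)
  obtain m where m: "n = m + 2" using assms(2) by (metis add.commute le_Suc_ex)
  have "(?q - 1) * ?q ^ (m + 2) = (\<Sum>k\<le>Suc (m div 2). ?q ^ k * ?S (m + 2 - 2 * k))"
    using decomp[of "m + 2"] by simp
  also have "\<dots> = ?S (m + 2) + (\<Sum>k\<le>m div 2. ?q ^ Suc k * ?S (m - 2 * k))"
    by (subst sum.atMost_Suc_shift) simp
  also have "(\<Sum>k\<le>m div 2. ?q ^ Suc k * ?S (m - 2 * k))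
      = ?q * (\<Sum>k\<le>m div 2. ?q ^ k * ?S (m - 2 * k))"
    by (simp add: sum_distrib_left mult.assoc)
  also have "\<dots> = ?q * ((?q - 1) * ?q ^ m)" by (simp only: decomp)
  finally have "?S n + (?q - 1) * ?q ^ (n - 1) = (?q - 1) * ?q ^ n"
    by (simp add: m algebra_simps)
  hence "real (?S n) + real (?q - 1) * real ?q ^ (n - 1) = real (?q - 1) * real ?q ^ n"
    by (simp only: of_nat_add [symmetric] of_nat_mult [symmetric] of_nat_power [symmetric]
        of_nat_eq_iff)
  moreover have "real (?q - 1) = q - 1" by (simp add: q_def of_nat_diff Suc_leI)
  ultimately show ?thesis by (simp add: q_def algebra_simps)
qed

lemma bij_betw_squarefree_polys_fcopy:
  "bij_betw (map_poly to_fcopy) {p :: 'a::field poly. squarefree p \<and> degree p = n}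
     {p. squarefree p \<and> degree p = n}"
proof (rule bij_betwI[where g = "map_poly of_fcopy"])
  show "map_poly to_fcopy \<in> {p :: 'a poly. squarefree p \<and> degree p = n} \<rightarrow>
      {p. squarefree p \<and> degree p = n}"
    by simp
  show "map_poly of_fcopy \<in> {p :: 'a fcopy poly. squarefree p \<and> degree p = n} \<rightarrow>
      {p. squarefree p \<and> degree p = n}"
  proof
    fix p :: "'a fcopy poly" assume "p \<in> {p. squarefree p \<and> degree p = n}"
    thus "map_poly of_fcopy p \<in> {p. squarefree p \<and> degree p = n}"
      using squarefree_map_poly_to_fcopy_iff[of "map_poly of_fcopy p"] by simp
  qed
qed simp_all

lemma card_squarefree_polys_of_degree_finite_field:
  fixes n :: nat
  defines "q \<equiv> real CARD('a::{finite,field})"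
  assumes "n \<ge> 2"
  shows "real (card {p :: 'a poly. squarefree p \<and> degree p = n}) = (q - 1) * (q ^ n - q ^ (n - 1))"
proof -
  have "card {p :: 'a poly. squarefree p \<and> degree p = n} =
      card {p :: 'a fcopy poly. squarefree p \<and> degree p = n}"
    by (rule bij_betw_same_card[OF bij_betw_squarefree_polys_fcopy])
  thus ?thesis
    using card_squarefree_polys_of_degree[OF assms(2), where 'a = "'a fcopy"]
    by (simp add: q_def CARD_fcopy)
qed

lemma card_squarefree_polys_of_top_degrees:
  fixes d :: nat
  defines "q \<equiv> real CARD('a::{finite,field})"
  assumes "d \<ge> 3"
  shows "real (card {h :: 'a poly. squarefree h \<and> degree h \<in> {d - 1, d}}) =
    (q - 1) * (q ^ d - q ^ (d - 2))"
proof -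
  let ?S = "\<lambda>n. {h :: 'a poly. squarefree h \<and> degree h = n}"
  have fin: "finite (?S n)" for n
    by (rule finite_subset[OF _ finite_polys_below[of "Suc n"]]) (auto simp: polys_below_Suc_iff)
  have "{h :: 'a poly. squarefree h \<and> degree h \<in> {d - 1, d}} = ?S d \<union> ?S (d - 1)" by auto
  moreover have "?S d \<inter> ?S (d - 1) = {}" using assms(2) by auto
  ultimately have "card {h :: 'a poly. squarefree h \<and> degree h \<in> {d - 1, d}} =
      card (?S d) + card (?S (d - 1))"
    using fin by (simp add: card_Un_disjoint)
  moreover have "real (card (?S d)) = (q - 1) * (q ^ d - q ^ (d - 1))"
    using card_squarefree_polys_of_degree_finite_field[of d] assms(2) by (simp add: q_def)
  moreover have "2 \<le> d - 1" using assms(2) by simp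
  hence "real (card (?S (d - 1))) = (q - 1) * (q ^ (d - 1) - q ^ (d - 2))"
    using card_squarefree_polys_of_degree_finite_field[of "d - 1", where 'a = 'a]
    by (simp add: q_def diff_diff_left numeral_2_eq_2)
  ultimately show ?thesis by (simp add: algebra_simps)
qed

section \<open>Restricting a plane curve to a line\<close>

lemma infinite_UNIV_alg_closed: "infinite (UNIV :: 'a::alg_closed_field set)"
proof
  assume fin: "finite (UNIV :: 'a set)"
  define p :: "'a poly" where "p = (\<Prod>a\<in>UNIV. [:-a, 1:]) + 1"
  have "degree (\<Prod>a\<in>(UNIV :: 'a set). [:-a, 1:]) = CARD('a)"
    by (subst degree_prod_eq_sum_degree) (auto simp: fin)
  hence "degree p > 0" using fin by (simp add: p_def degree_add_eq_left finite_UNIV_card_ge_0)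
  then obtain x where "poly p x = 0" using alg_closed_imp_poly_has_root by blast
  moreover have "(\<Prod>a\<in>UNIV. x - a) = 0" using fin by (intro prod_zero) auto
  ultimately show False by (simp add: p_def poly_prod)
qed

definition scale3 :: "'a::times \<Rightarrow> 'a \<times> 'a \<times> 'a \<Rightarrow> 'a \<times> 'a \<times> 'a" where
  "scale3 c p = (case p of (x, y, z) \<Rightarrow> (c * x, c * y, c * z))"

lemma proj_norm_nonzero: "proj_norm p \<Longrightarrow> p \<noteq> (0, 0, 0)"
  by (auto simp: proj_norm_def)

lemma proj_norm_scale3_exists:
  fixes p :: "'a::field \<times> 'a \<times> 'a"
  assumes "p \<noteq> (0, 0, 0)"
  obtains c where "c \<noteq> 0" "proj_norm (scale3 c p)"
proof -
  obtain x y z where p: "p = (x, y, z)" by (cases p)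
  have "\<exists>c. c \<noteq> 0 \<and> proj_norm (scale3 c p)"
    using assms
    by (cases "x = 0"; cases "y = 0")
       (auto simp: p proj_norm_def scale3_def intro: exI[of _ "inverse x"] exI[of _ "inverse y"]
         exI[of _ "inverse z"])
  thus ?thesis using that by blast
qed

lemma proj_norm_scale3_eq:
  fixes p :: "'a::field \<times> 'a \<times> 'a"
  assumes "proj_norm (scale3 c p)" "proj_norm (scale3 c' p)"
  shows "scale3 c p = scale3 c' p"
proof -
  have inverse_unique: "c = c'" if "c * x = 1" "c' * x = 1" for x :: 'a
    using that by (metis mult.left_commute mult_1_right)
  obtain x y z where p: "p = (x, y, z)" by (cases p)
  have "c = c'"
    using assms
    by (cases "x = 0"; cases "y = 0") (auto simp: p proj_norm_def scale3_def inverse_unique)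
  thus ?thesis by simp
qed

lemma eval3_scale3: "eval3 d f (scale3 c p) = c ^ d * eval3 d f p"
proof -
  obtain x y z where p: "p = (x, y, z)" by (cases p)
  have "eval3 d f (scale3 c p) =
      (\<Sum>(i, j, k)\<in>mono3 d. to_ac (f (i, j, k)) * (c * x) ^ i * (c * y) ^ j * (c * z) ^ k)"
    by (simp add: eval3_def scale3_def p)
  also have "\<dots> = (\<Sum>(i, j, k)\<in>mono3 d. c ^ d * (to_ac (f (i, j, k)) * x ^ i * y ^ j * z ^ k))"
  proof (rule sum.cong)
    fix m assume "m \<in> mono3 d"
    moreover obtain i j k where m: "m = (i, j, k)" by (cases m)
    ultimately have "d = i + j + k" by (simp add: mono3_def)
    thus "(case m of (i, j, k) \<Rightarrow> to_ac (f (i, j, k)) * (c * x) ^ i * (c * y) ^ j * (c * z) ^ k) =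
        (case m of (i, j, k) \<Rightarrow> c ^ d * (to_ac (f (i, j, k)) * x ^ i * y ^ j * z ^ k))"
      by (simp add: m power_mult_distrib power_add)
  qed simp
  finally show ?thesis by (simp add: eval3_def p sum_distrib_left case_prod_beta)
qed

definition on_line ::
    "'a::field \<times> 'a \<times> 'a \<Rightarrow> 'a alg_closure \<times> 'a alg_closure \<times> 'a alg_closure \<Rightarrow> bool" where
  "on_line l p = (case l of (a, b, c) \<Rightarrow> case p of (x, y, z) \<Rightarrow>
     to_ac a * x + to_ac b * y + to_ac c * z = 0)"

lemma line_curve_pts_eq: "line_curve_pts d l f = {p. proj_norm p \<and> on_line l p \<and> eval3 d f p = 0}"
  by (auto simp: line_curve_pts_def on_line_def split: prod.splits)

definition line_point :: "'a::field \<times> 'a \<times> 'a \<Rightarrow> 'a \<times> 'a \<times> 'a \<Rightarrow> 'a alg_closure \<Rightarrow> 'a alg_closure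
    \<Rightarrow> 'a alg_closure \<times> 'a alg_closure \<times> 'a alg_closure" where
  "line_point u w s t =
     (s * to_ac (fst u) + t * to_ac (fst w),
      s * to_ac (fst (snd u)) + t * to_ac (fst (snd w)),
      s * to_ac (snd (snd u)) + t * to_ac (snd (snd w)))"

lemma scale3_line_point: "scale3 c (line_point u w s t) = line_point u w (c * s) (c * t)"
  by (simp add: scale3_def line_point_def algebra_simps)

lemma line_point_0_0: "line_point u w 0 0 = (0, 0, 0)"
  by (simp add: line_point_def)

locale line_chart =
  fixes l :: "'a::field \<times> 'a \<times> 'a" and u w :: "'a \<times> 'a \<times> 'a"
    and \<alpha> \<beta> :: "'a alg_closure \<times> 'a alg_closure \<times> 'a alg_closure \<Rightarrow> 'a alg_closure"
  assumes coords_line_point [simp]: "\<alpha> (line_point u w s t) = s" "\<beta> (line_point u w s t) = t"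
    and on_line_line_point: "on_line l (line_point u w s t)"
    and on_line_imp_line_point: "on_line l p \<Longrightarrow> p = line_point u w (\<alpha> p) (\<beta> p)"
begin

lemma line_point_eq_0_iff: "line_point u w s t = (0, 0, 0) \<longleftrightarrow> s = 0 \<and> t = 0"
  by (metis coords_line_point line_point_0_0)

lemma on_line_affine:
  assumes "on_line l p" "\<alpha> p \<noteq> 0"
  shows "p = scale3 (\<alpha> p) (line_point u w 1 (\<beta> p / \<alpha> p))"
proof -
  have "scale3 (\<alpha> p) (line_point u w 1 (\<beta> p / \<alpha> p)) = line_point u w (\<alpha> p) (\<beta> p)"
    using assms(2) by (simp add: scale3_line_point)
  thus ?thesis using on_line_imp_line_point[OF assms(1)] by simp
qed

lemma on_line_at_infinity:
  assumes "on_line l p" "\<alpha> p = 0"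
  shows "p = scale3 (\<beta> p) (line_point u w 0 1)"
proof -
  have "scale3 (\<beta> p) (line_point u w 0 1) = line_point u w (\<alpha> p) (\<beta> p)"
    using assms(2) by (simp add: scale3_line_point)
  thus ?thesis using on_line_imp_line_point[OF assms(1)] by simp
qed

definition affine_roots :: "nat \<Rightarrow> (nat \<times> nat \<times> nat \<Rightarrow> 'a) \<Rightarrow> 'a alg_closure set" where
  "affine_roots d f = {t. eval3 d f (line_point u w 1 t) = 0}"

definition line_roots :: "nat \<Rightarrow> (nat \<times> nat \<times> nat \<Rightarrow> 'a) \<Rightarrow> 'a alg_closure option set" where
  "line_roots d f =
     Some ` affine_roots d f \<union> (if eval3 d f (line_point u w 0 1) = 0 then {None} else {})"

text \<open>The affine coordinate \<open>t = \<beta> p / \<alpha> p\<close> of a point of the line; \<open>None\<close> stands for the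
  point at infinity \<open>w\<close>.\<close>

definition chart_param ::
    "'a alg_closure \<times> 'a alg_closure \<times> 'a alg_closure \<Rightarrow> 'a alg_closure option" where
  "chart_param p = (if \<alpha> p = 0 then None else Some (\<beta> p / \<alpha> p))"

lemma inj_on_chart_param: "inj_on chart_param (line_curve_pts d l f)"
proof (rule inj_onI)
  fix p p' assume "p \<in> line_curve_pts d l f" "p' \<in> line_curve_pts d l f"
    and eq: "chart_param p = chart_param p'"
  hence p: "proj_norm p" "on_line l p" and p': "proj_norm p'" "on_line l p'"
    by (simp_all add: line_curve_pts_eq)
  show "p = p'"
  proof (cases "\<alpha> p = 0")
    case True
    hence "\<alpha> p' = 0" using eq by (auto simp: chart_param_def split: if_splits)
    thus ?thesis using proj_norm_scale3_eq p p' on_line_at_infinity \<open>\<alpha> p = 0\<close> by metis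
  next
    case False
    hence "\<alpha> p' \<noteq> 0" "\<beta> p' / \<alpha> p' = \<beta> p / \<alpha> p"
      using eq by (auto simp: chart_param_def split: if_splits)
    thus ?thesis using proj_norm_scale3_eq p p' on_line_affine \<open>\<alpha> p \<noteq> 0\<close> by metis
  qed
qed

lemma chart_param_mem_line_roots:
  assumes "p \<in> line_curve_pts d l f"
  shows "chart_param p \<in> line_roots d f"
proof -
  have p: "proj_norm p" "on_line l p" "eval3 d f p = 0"
    using assms by (simp_all add: line_curve_pts_eq)
  show ?thesis
  proof (cases "\<alpha> p = 0")
    case True
    note p_eq = on_line_at_infinity[OF p(2) True]
    have "\<beta> p \<noteq> 0"
      using p_eq proj_norm_nonzero[OF p(1)] by (auto simp: scale3_line_point line_point_0_0)
    moreover have "eval3 d f (line_point u w 0 1) = 0"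
      using p(3) \<open>\<beta> p \<noteq> 0\<close> by (subst (asm) p_eq) (simp add: eval3_scale3)
    ultimately show ?thesis using True by (simp add: chart_param_def line_roots_def)
  next
    case False
    note p_eq = on_line_affine[OF p(2) False]
    have "\<beta> p / \<alpha> p \<in> affine_roots d f"
      using p(3) False by (subst (asm) p_eq) (simp add: eval3_scale3 affine_roots_def)
    thus ?thesis using False by (simp add: chart_param_def line_roots_def)
  qed
qed

lemma line_roots_subset_chart_param_image: "line_roots d f \<subseteq> chart_param ` line_curve_pts d l f"
proof
  have image_mem: "chart_param (line_point u w s t) \<in> chart_param ` line_curve_pts d l f"
    if root: "eval3 d f (line_point u w s t) = 0" and nonzero: "(s, t) \<noteq> (0, 0)" for s t
  proof -
    obtain c where c: "c \<noteq> 0" "proj_norm (scale3 c (line_point u w s t))"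
      using nonzero line_point_eq_0_iff by (metis proj_norm_scale3_exists prod.inject)
    have "on_line l (scale3 c (line_point u w s t))"
      by (simp add: scale3_line_point on_line_line_point)
    moreover have "eval3 d f (scale3 c (line_point u w s t)) = 0"
      using root by (simp add: eval3_scale3)
    ultimately have "scale3 c (line_point u w s t) \<in> line_curve_pts d l f"
      using c(2) by (simp add: line_curve_pts_eq)
    moreover have "chart_param (scale3 c (line_point u w s t)) = chart_param (line_point u w s t)"
      using c(1) by (simp add: scale3_line_point chart_param_def)
    ultimately show ?thesis by (metis image_eqI)
  qed
  fix x assume "x \<in> line_roots d f"
  then consider t where "x = Some t" "eval3 d f (line_point u w 1 t) = 0"
    | "x = None" "eval3 d f (line_point u w 0 1) = 0"
    by (auto simp: line_roots_def affine_roots_def split: if_splits)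
  thus "x \<in> chart_param ` line_curve_pts d l f"
  proof cases
    case (1 t)
    thus ?thesis using image_mem[of 1 t] by (simp add: chart_param_def)
  next
    case 2
    thus ?thesis using image_mem[of 0 1] by (simp add: chart_param_def)
  qed
qed

lemma bij_betw_chart_param: "bij_betw chart_param (line_curve_pts d l f) (line_roots d f)"
proof (rule bij_betw_imageI)
  show "chart_param ` line_curve_pts d l f = line_roots d f"
    using chart_param_mem_line_roots line_roots_subset_chart_param_image by blast
qed (rule inj_on_chart_param)

lemma finite_line_curve_pts_iff: "finite (line_curve_pts d l f) \<longleftrightarrow> finite (affine_roots d f)"
  using bij_betw_finite[OF bij_betw_chart_param] by (simp add: line_roots_def finite_image_iff)

lemma card_line_curve_pts:
  assumes "finite (affine_roots d f)"
  shows "card (line_curve_pts d l f) =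
    card (affine_roots d f) + (if eval3 d f (line_point u w 0 1) = 0 then 1 else 0)"
  using bij_betw_same_card[OF bij_betw_chart_param] assms
  by (simp add: line_roots_def card_image)

end

lemma finite_mono3 [simp]: "finite (mono3 d)"
  by (rule finite_subset[of _ "{..d} \<times> {..d} \<times> {..d}"]) (auto simp: mono3_def)

text \<open>\<open>line_monom u w (i, j, k)\<close> is the monomial \<open>x\<^sup>i y\<^sup>j z\<^sup>k\<close> evaluated at \<open>u + t w\<close>, so
  \<open>line_poly d u w f\<close> is \<open>f(u + t w)\<close>, the restriction of \<open>f\<close> to the line in the chart
  \<open>s = 1\<close>.\<close>

definition line_monom ::
    "'a::comm_semiring_1 \<times> 'a \<times> 'a \<Rightarrow> 'a \<times> 'a \<times> 'a \<Rightarrow> nat \<times> nat \<times> nat \<Rightarrow> 'a poly" where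
  "line_monom u w m = (case m of (i, j, k) \<Rightarrow>
     [:fst u, fst w:] ^ i * [:fst (snd u), fst (snd w):] ^ j * [:snd (snd u), snd (snd w):] ^ k)"

definition line_poly ::
    "nat \<Rightarrow> 'a::field \<times> 'a \<times> 'a \<Rightarrow> 'a \<times> 'a \<times> 'a \<Rightarrow> (nat \<times> nat \<times> nat \<Rightarrow> 'a) \<Rightarrow> 'a poly" where
  "line_poly d u w f = (\<Sum>m\<in>mono3 d. smult (f m) (line_monom u w m))"

lemma line_poly_add: "line_poly d u w (f + g) = line_poly d u w f + line_poly d u w g"
  by (simp add: line_poly_def sum.distrib smult_add_left)

lemma poly_line_poly: "poly (map_poly to_ac (line_poly d u w f)) t = eval3 d f (line_point u w 1 t)"
  by (simp add: line_poly_def line_monom_def eval3_def line_point_def to_ac.map_poly_hom_sum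
      poly_sum case_prod_beta mult.assoc)

lemma coeff_mult_degree_le_sum:
  fixes p q :: "'a::comm_semiring_1 poly"
  assumes "degree p \<le> m" "degree q \<le> n"
  shows "coeff (p * q) (m + n) = coeff p m * coeff q n"
proof -
  have "coeff (p * q) (m + n) = (\<Sum>i\<le>m + n. coeff p i * coeff q (m + n - i))"
    by (rule coeff_mult)
  also have "\<dots> = (\<Sum>i\<in>{m}. coeff p i * coeff q (m + n - i))"
  proof (rule sum.mono_neutral_right)
    show "\<forall>i\<in>{..m + n} - {m}. coeff p i * coeff q (m + n - i) = 0"
    proof
      fix i assume "i \<in> {..m + n} - {m}"
      hence "m < i \<or> n < m + n - i" by auto
      thus "coeff p i * coeff q (m + n - i) = 0" using assms by (auto simp: coeff_eq_0)
    qed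
  qed auto
  finally show ?thesis by simp
qed

lemma degree_linear_power_le: "degree ([:a, b:] ^ n) \<le> n"
proof -
  have "degree [:a, b:] \<le> 1" using degree_pCons_le[of a "[:b:]"] by simp
  thus ?thesis using degree_power_le[of "[:a, b:]" n] mult_le_mono1 order.trans by fastforce
qed

lemma coeff_linear_power_top: "coeff ([:a, b:] ^ n) n = b ^ n"
proof (induction n)
  case (Suc n)
  have "coeff ([:a, b:] ^ n) (Suc n) = 0"
    using degree_linear_power_le[of a b n] by (simp add: coeff_eq_0)
  thus ?case using Suc.IH by simp
qed simp

lemma degree_line_monom: "m \<in> mono3 d \<Longrightarrow> degree (line_monom u w m) \<le> d"
  unfolding line_monom_def mono3_def
  by (auto intro!: order.trans[OF degree_mult_le] add_mono degree_linear_power_le)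

lemma coeff_line_monom_top:
  assumes "m \<in> mono3 d"
  shows "coeff (line_monom u w m) d =
    (case m of (i, j, k) \<Rightarrow> fst w ^ i * fst (snd w) ^ j * snd (snd w) ^ k)"
proof -
  obtain i j k where m: "m = (i, j, k)" and d: "d = i + j + k"
    using assms by (cases m) (auto simp: mono3_def)
  show ?thesis
    unfolding m d line_monom_def
    by (simp add: coeff_mult_degree_le_sum degree_linear_power_le coeff_linear_power_top
        order.trans[OF degree_mult_le] add_mono)
qed

lemma degree_line_poly: "degree (line_poly d u w f) \<le> d"
  unfolding line_poly_def
  by (intro degree_sum_le) (auto intro: order.trans[OF degree_smult_le] degree_line_monom)

lemma coeff_line_poly_top: "to_ac (coeff (line_poly d u w f) d) = eval3 d f (line_point u w 0 1)"
  by (simp add: line_poly_def coeff_sum coeff_line_monom_top eval3_def line_point_def to_ac.hom_sum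
      case_prod_beta mult.assoc cong: sum.cong)

lemma transverse_iff_squarefree_line_poly:
  fixes l u w :: "'a::{finite,field} \<times> 'a \<times> 'a"
  assumes "line_chart l u w \<alpha> \<beta>"
  shows "transverse d l f \<longleftrightarrow>
    squarefree (line_poly d u w f) \<and> degree (line_poly d u w f) \<in> {d - 1, d}"
proof -
  interpret line_chart l u w \<alpha> \<beta> by fact
  define h where "h = line_poly d u w f"
  have roots: "affine_roots d f = {t. poly (map_poly to_ac h) t = 0}"
    by (simp add: affine_roots_def h_def poly_line_poly)
  have at_infinity: "eval3 d f (line_point u w 0 1) = 0 \<longleftrightarrow> coeff h d = 0"
    by (simp add: h_def flip: coeff_line_poly_top)
  have "degree h \<le> d" unfolding h_def by (rule degree_line_poly)
  show ?thesis
  proof (cases "h = 0")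
    case True
    hence "\<not> finite (line_curve_pts d l f)"
      using finite_line_curve_pts_iff roots infinite_UNIV_alg_closed by simp
    thus ?thesis using True by (simp add: transverse_def h_def)
  next
    case False
    have fin: "finite (affine_roots d f)" using False by (simp add: roots poly_roots_finite)
    have card_le: "card (affine_roots d f) \<le> degree h"
      using False card_poly_roots_bound[of "map_poly to_ac h"] by (simp add: roots)
    have sf_iff: "card (affine_roots d f) = degree h \<longleftrightarrow> squarefree h"
      using card_roots_map_poly_eq_degree_iff_squarefree[OF to_ac.field_hom_axioms False]
      by (simp add: roots)
    have "transverse d l f \<longleftrightarrow> card (affine_roots d f) + (if coeff h d = 0 then 1 else 0) = d"
      using fin finite_line_curve_pts_iff
      by (simp add: transverse_def card_line_curve_pts at_infinity)
    also have "\<dots> \<longleftrightarrow> squarefree h \<and> degree h \<in> {d - 1, d}"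
    proof (cases "coeff h d = 0")
      case True
      hence "degree h < d"
        using \<open>degree h \<le> d\<close> False by (metis le_neq_implies_less leading_coeff_0_iff)
      thus ?thesis using True card_le sf_iff by auto
    next
      case False
      hence "degree h = d" using \<open>degree h \<le> d\<close> le_degree by (metis le_antisym)
      thus ?thesis using False sf_iff by auto
    qed
    finally show ?thesis by (simp add: h_def)
  qed
qed

lemma polys_below_subset_line_poly_image:
  fixes u w :: "'a::field \<times> 'a \<times> 'a"
  assumes mono: "\<And>j. j \<le> d \<Longrightarrow> \<tau> j \<in> mono3 d" and inj: "inj_on \<tau> {..d}"
    and monom: "\<And>j. j \<le> d \<Longrightarrow> line_monom u w (\<tau> j) = monom 1 j"
  shows "polys_below (Suc d) \<subseteq> line_poly d u w ` hom_forms d"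
proof
  fix h :: "'a poly" assume h: "h \<in> polys_below (Suc d)"
  define f where "f = (\<lambda>m. if m \<in> \<tau> ` {..d} then coeff h (the_inv_into {..d} \<tau> m) else 0)"
  have "f \<in> hom_forms d" using mono by (auto simp: f_def hom_forms_def)
  moreover have "line_poly d u w f = h"
  proof -
    have "line_poly d u w f = (\<Sum>m\<in>\<tau> ` {..d}. smult (f m) (line_monom u w m))"
      unfolding line_poly_def by (rule sum.mono_neutral_right) (auto simp: mono f_def)
    also have "\<dots> = (\<Sum>j\<le>d. monom (coeff h j) j)"
      by (simp add: sum.reindex[OF inj] f_def monom smult_monom the_inv_into_f_f[OF inj])
    also have "\<dots> = h" using h by (intro poly_as_sum_of_monoms') (simp add: polys_below_Suc_iff)
    finally show ?thesis .
  qed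
  ultimately show "h \<in> line_poly d u w ` hom_forms d" by blast
qed

lemma line_chart_c_nonzero:
  fixes a b c :: "'a::field"
  assumes "c \<noteq> 0"
  shows "line_chart (a, b, c) (1, 0, - a / c) (0, 1, - b / c) fst (\<lambda>p. fst (snd p))"
proof
  fix p :: "'a alg_closure \<times> 'a alg_closure \<times> 'a alg_closure"
  obtain x y z where p: "p = (x, y, z)" by (cases p)
  assume "on_line (a, b, c) p"
  hence "to_ac a * x + to_ac b * y + to_ac c * z = 0" by (simp add: on_line_def p)
  hence "to_ac c * z = - (to_ac a * x + to_ac b * y)" by (metis add.commute eq_neg_iff_add_eq_0)
  hence "z = x * (- to_ac a / to_ac c) + y * (- to_ac b / to_ac c)"
    using assms by (simp add: field_simps)
  thus "p = line_point (1, 0, - a / c) (0, 1, - b / c) (fst p) (fst (snd p))"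
    by (simp add: p line_point_def)
qed (use assms in \<open>auto simp: on_line_def line_point_def field_simps\<close>)

lemma line_chart_b_nonzero:
  fixes a b :: "'a::field"
  assumes "b \<noteq> 0"
  shows "line_chart (a, b, 0) (1, - a / b, 0) (0, 0, 1) fst (\<lambda>p. snd (snd p))"
proof
  fix p :: "'a alg_closure \<times> 'a alg_closure \<times> 'a alg_closure"
  obtain x y z where p: "p = (x, y, z)" by (cases p)
  assume "on_line (a, b, 0) p"
  hence "to_ac a * x + to_ac b * y = 0" by (simp add: on_line_def p)
  hence "to_ac b * y = - (to_ac a * x)" by (metis add.commute eq_neg_iff_add_eq_0)
  hence "y = x * (- to_ac a / to_ac b)" using assms by (simp add: field_simps)
  thus "p = line_point (1, - a / b, 0) (0, 0, 1) (fst p) (snd (snd p))"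
    by (simp add: p line_point_def)
qed (use assms in \<open>auto simp: on_line_def line_point_def field_simps\<close>)

lemma line_chart_a_nonzero:
  fixes a :: "'a::field"
  assumes "a \<noteq> 0"
  shows "line_chart (a, 0, 0) (0, 1, 0) (0, 0, 1) (\<lambda>p. fst (snd p)) (\<lambda>p. snd (snd p))"
  by standard (use assms in \<open>auto simp: on_line_def line_point_def\<close>)

lemma line_chart_exists:
  fixes l :: "'a::field \<times> 'a \<times> 'a"
  assumes "l \<noteq> (0, 0, 0)"
  obtains u w \<alpha> \<beta> where "line_chart l u w \<alpha> \<beta>"
    and "\<And>d. polys_below (Suc d) \<subseteq> line_poly d u w ` hom_forms d"
proof -
  obtain a b c where l: "l = (a, b, c)" by (cases l)
  consider "c \<noteq> 0" | "c = 0" "b \<noteq> 0" | "c = 0" "b = 0" "a \<noteq> 0" using assms l by auto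
  thus ?thesis
  proof cases
    case 1
    have "polys_below (Suc d) \<subseteq> line_poly d (1, 0, - a / c) (0, 1, - b / c) ` hom_forms d" for d
      by (rule polys_below_subset_line_poly_image[where \<tau> = "\<lambda>j. (d - j, j, 0)"])
        (auto simp: mono3_def inj_on_def line_monom_def monom_altdef simp flip: one_pCons)
    thus ?thesis using that line_chart_c_nonzero[OF 1, of a b] unfolding l by blast
  next
    case 2
    have "polys_below (Suc d) \<subseteq> line_poly d (1, - a / b, 0) (0, 0, 1) ` hom_forms d" for d
      by (rule polys_below_subset_line_poly_image[where \<tau> = "\<lambda>j. (d - j, 0, j)"])
        (auto simp: mono3_def inj_on_def line_monom_def monom_altdef simp flip: one_pCons)
    thus ?thesis using that line_chart_b_nonzero[OF 2(2), of a] unfolding l 2(1) by blast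
  next
    case 3
    have "polys_below (Suc d) \<subseteq> line_poly d (0, 1, 0) (0, 0, 1) ` hom_forms d" for d
      by (rule polys_below_subset_line_poly_image[where \<tau> = "\<lambda>j. (0, d - j, j)"])
        (auto simp: mono3_def inj_on_def line_monom_def monom_altdef simp flip: one_pCons)
    thus ?thesis using that line_chart_a_nonzero[OF 3(3)] unfolding l 3(1,2) by blast
  qed
qed

section \<open>The density of non-transverse curves\<close>

lemma card_preimage_additive:
  fixes \<phi> :: "'a::ab_group_add \<Rightarrow> 'b::ab_group_add"
  assumes "finite A" and diff_closed: "\<And>x y. x \<in> A \<Longrightarrow> y \<in> A \<Longrightarrow> x - y \<in> A"
    and additive: "\<And>x y. \<phi> (x + y) = \<phi> x + \<phi> y" and "S \<subseteq> \<phi> ` A"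
  shows "card {x\<in>A. \<phi> x \<in> S} = card S * card {x\<in>A. \<phi> x = 0}"
proof -
  have fiber: "card {x\<in>A. \<phi> x = s} = card {x\<in>A. \<phi> x = 0}" if s: "s \<in> S" for s
  proof -
    obtain a where a: "a \<in> A" "\<phi> a = s" using s assms(4) by auto
    have "\<phi> (x - a) = \<phi> x - s" for x using additive[of "x - a" a] a(2) by (simp add: algebra_simps)
    moreover have "x + a \<in> A" if "x \<in> A" for x
      using diff_closed[OF that diff_closed[OF diff_closed[OF a(1) a(1)] a(1)]] by simp
    ultimately have "bij_betw (\<lambda>x. x - a) {x\<in>A. \<phi> x = s} {x\<in>A. \<phi> x = 0}"
      using a diff_closed additive by (intro bij_betwI[where g = "\<lambda>x. x + a"]) auto
    thus ?thesis by (rule bij_betw_same_card)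
  qed
  have "card {x\<in>A. \<phi> x \<in> S} = card (\<Union>s\<in>S. {x\<in>A. \<phi> x = s})"
    by (rule arg_cong[where f = card]) auto
  also have "\<dots> = (\<Sum>s\<in>S. card {x\<in>A. \<phi> x = s})"
    using assms(1) finite_surj[OF assms(1,4)] by (intro card_UN_disjoint) auto
  also have "\<dots> = card S * card {x\<in>A. \<phi> x = 0}" by (simp add: fiber)
  finally show ?thesis .
qed

lemma finite_hom_forms: "finite (hom_forms d :: (nat \<times> nat \<times> nat \<Rightarrow> 'a::{finite,field}) set)"
  by (rule finite_subset[OF _ finite_set_of_finite_funs[of "mono3 d" UNIV 0]])
    (auto simp: hom_forms_def)

lemma nontransverse_set_Int_hom_forms:
  fixes l u w :: "'a::{finite,field} \<times> 'a \<times> 'a"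
  assumes "line_chart l u w \<alpha> \<beta>" and "d \<ge> 1"
  shows "nontransverse_set l \<inter> hom_forms d = {f \<in> hom_forms d. \<not> transverse d l f}"
proof (intro equalityI subsetI)
  fix f assume f: "f \<in> nontransverse_set l \<inter> hom_forms d"
  then obtain d' where d': "f \<in> hom_forms d'" "\<not> transverse d' l f"
    by (auto simp: nontransverse_set_def)
  show "f \<in> {f \<in> hom_forms d. \<not> transverse d l f}"
  proof (cases "d' = d")
    case False
    have "f = 0"
    proof
      fix m
      have "m \<notin> mono3 d \<or> m \<notin> mono3 d'" using False by (auto simp: mono3_def)
      thus "f m = 0 m" using f d'(1) unfolding hom_forms_def zero_fun_def by blast
    qed
    hence "line_poly d u w f = 0" by (simp add: line_poly_def)
    thus ?thesis using f transverse_iff_squarefree_line_poly[OF assms(1)] by simp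
  qed (use f d' in simp)
qed (use assms(2) in \<open>unfold nontransverse_set_def, blast\<close>)

lemma mu_d_nontransverse_set_eq_card:
  fixes l u w :: "'a::{finite,field} \<times> 'a \<times> 'a"
  assumes chart: "line_chart l u w \<alpha> \<beta>"
    and surj: "polys_below (Suc d) \<subseteq> line_poly d u w ` hom_forms d" and "d \<ge> 1"
  shows "mu_d d (nontransverse_set l) =
    real (card (polys_below (Suc d) - {h :: 'a poly. squarefree h \<and> degree h \<in> {d - 1, d}}))
      / real CARD('a) ^ Suc d"
proof -
  let ?HF = "hom_forms d :: (nat \<times> nat \<times> nat \<Rightarrow> 'a) set"
  let ?P = "polys_below (Suc d) :: 'a poly set"
  let ?T = "{h :: 'a poly. squarefree h \<and> degree h \<in> {d - 1, d}}"
  let ?K = "card {f \<in> ?HF. line_poly d u w f = 0}"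
  have count: "card {f \<in> ?HF. line_poly d u w f \<in> S} = card S * ?K" if "S \<subseteq> ?P" for S
    using that surj finite_hom_forms
    by (intro card_preimage_additive) (auto simp: hom_forms_def line_poly_add)
  have "?HF = {f \<in> ?HF. line_poly d u w f \<in> ?P}"
    by (auto simp: polys_below_Suc_iff degree_line_poly)
  hence card_HF: "card ?HF = CARD('a) ^ Suc d * ?K"
    using count[of ?P] by (simp add: card_polys_below)
  have "nontransverse_set l \<inter> ?HF = {f \<in> ?HF. line_poly d u w f \<in> ?P - ?T}"
    using assms(3) by (auto simp: nontransverse_set_Int_hom_forms[OF chart]
        transverse_iff_squarefree_line_poly[OF chart] polys_below_Suc_iff degree_line_poly)
  hence card_NT: "card (nontransverse_set l \<inter> ?HF) = card (?P - ?T) * ?K"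
    using count[of "?P - ?T"] by simp
  have "finite {f \<in> ?HF. line_poly d u w f = 0}"
    by (rule finite_subset[OF _ finite_hom_forms]) blast
  moreover have "0 \<in> {f \<in> ?HF. line_poly d u w f = 0}" by (simp add: hom_forms_def line_poly_def)
  ultimately have "?K > 0" using card_gt_0_iff by blast
  thus ?thesis using card_HF card_NT by (simp add: mu_d_def)
qed

lemma mu_d_nontransverse_set:
  fixes l u w :: "'a::{finite,field} \<times> 'a \<times> 'a"
  defines "q \<equiv> real CARD('a)"
  assumes "line_chart l u w \<alpha> \<beta>"
    and "polys_below (Suc d) \<subseteq> line_poly d u w ` hom_forms d" and "d \<ge> 3"
  shows "mu_d d (nontransverse_set l) = 1/q + 1/q^2 - 1/q^3"
proof -
  let ?P = "polys_below (Suc d) :: 'a poly set"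
  let ?T = "{h :: 'a poly. squarefree h \<and> degree h \<in> {d - 1, d}}"
  have "?T \<subseteq> ?P" by (auto simp: polys_below_Suc_iff)
  hence "card (?P - ?T) = card ?P - card ?T" and "card ?T \<le> card ?P"
    by (simp_all add: card_Diff_subset finite_subset card_mono)
  hence card_real: "real (card (?P - ?T)) = q ^ Suc d - (q - 1) * (q ^ d - q ^ (d - 2))"
    using card_squarefree_polys_of_top_degrees[OF assms(4), where 'a = 'a]
    by (simp add: of_nat_diff card_polys_below q_def)
  obtain e where d: "d = e + 2" using le_Suc_ex[of 2 d] assms(4) by (auto simp: add.commute)
  have pw: "q ^ Suc d = q ^ e * q ^ 3" "q ^ d = q ^ e * q ^ 2" "q ^ (d - 2) = q ^ e"
    unfolding d by (simp_all add: power_add power2_eq_square power3_eq_cube mult_ac)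
  have "q > 0" by (simp add: q_def)
  have "(r * q ^ 3 - (q - 1) * (r * q ^ 2 - r)) / (r * q ^ 3) = 1/q + 1/q^2 - 1/q^3"
    if "r > 0" for r
    using that \<open>q > 0\<close> by (simp add: field_simps power2_eq_square power3_eq_cube)
  thus ?thesis
    using mu_d_nontransverse_set_eq_card[OF assms(2,3)] assms(4) \<open>q > 0\<close>
    unfolding card_real pw q_def [symmetric] by simp
qed

theorem lemma4p3:
  fixes l :: "'a::{finite,field} \<times> 'a \<times> 'a"
  assumes "l \<noteq> (0, 0, 0)"
  defines "q \<equiv> real CARD('a)"
  shows "(\<forall>d\<ge>3. mu_d d (nontransverse_set l) = 1/q + 1/q^2 - 1/q^3)
       \<and> (\<lambda>d. mu_d d (nontransverse_set l)) \<longlonglongrightarrow> 1/q + 1/q^2 - 1/q^3"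
proof -
  obtain u w \<alpha> \<beta> where chart: "line_chart l u w \<alpha> \<beta>"
    and surj: "\<And>d. polys_below (Suc d) \<subseteq> line_poly d u w ` hom_forms d"
    using line_chart_exists[OF assms(1)] by blast
  have exact: "\<forall>d\<ge>3. mu_d d (nontransverse_set l) = 1/q + 1/q^2 - 1/q^3"
    using mu_d_nontransverse_set[OF chart surj] by (simp add: q_def)
  hence "\<forall>\<^sub>F d in sequentially. mu_d d (nontransverse_set l) = 1/q + 1/q^2 - 1/q^3"
    by (intro eventually_sequentiallyI[of 3]) simp
  hence "(\<lambda>d. mu_d d (nontransverse_set l)) \<longlonglongrightarrow> 1/q + 1/q^2 - 1/q^3"
    by (rule tendsto_eventually)
  with exact show ?thesis by blast
qed

end
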